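(* Let $(V_{\bar0},\alpha)$ be a finite-dimensional real vector space with a non-degenerate symmetric bilinear form $\alpha$, and let $V_{\bar1}$ be a real or complex module over the Clifford algebra $Cl(V_{\bar0},\alpha)$ (resp. over $Cl(V_{\bar0},\alpha)\otimes\mathbb{C}$), with Clifford multiplication $(v,s)\mapsto v\cdot s$. Let $\mathcal{W}=\{f_s\colon V_{\bar0}\to V_{\bar1}\mid s\in V_{\bar1},\ f_s(v)=v\cdot s\}\subseteq\underline{\mathrm{Hom}}(V_{\bar0},V_{\bar1})$. If $\dim V_{\bar0}\geq3$, then $\mathrm{Spin}(V_{\bar0})\ltimes\mathcal{W}\leqslant GL(V)$, $V=V_{\bar0}\oplus V_{\bar1}$, is of finite type.
   Context: $\mathrm{Spin}(V_{\bar0})$ acts on $V_{\bar0}$ through $SO(V_{\bar0},\alpha)$ and on $V_{\bar1}$ by Clifford multiplication, giving $\mathrm{Spin}(V_{\bar0})\leqslant GL(V_{\bar0})\times GL(V_{\bar1})$; $\mathcal{W}$ is a $\mathrm{Spin}(V_{\bar0})$-submodule of the odd part $\underline{\mathrm{Hom}}(V_{\bar0},V_{\bar1})$ of $\mathfrak{gl}(V)$ (maps extended by zero on $V_{\bar1}$), and $\mathrm{Spin}(V_{\bar0})\ltimes\mathcal{W}$ is the corresponding Lie supergroup with Lie superalgebra $\mathfrak{g}=\mathfrak{spin}(V_{\bar0})\oplus\mathcal{W}\subseteq\mathfrak{gl}(V)$. Prolongations: $\mathfrak{g}^{(0)}=\mathfrak{g}$, $\mathfrak{g}^{(k)}=\{X\in\underline{\mathrm{Hom}}(V,\mathfrak{g}^{(k-1)})\mid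 X(v)(w)=(-1)^{|v||w|}X(w)(v)\text{ for homogeneous }v,w\}$ for $k\geq1$. Finite type means $\mathfrak{g}^{(k)}=0$ for some $k$. *)

theory Defs
  imports "HOL-Analysis.Analysis"
begin

text \<open>V0 is the type 'a (a finite-dimensional real vector space, euclidean_space),
  V1 is the type 'b (a real vector space), V = V0 (+) V1 is the product type 'a * 'b.\<close>

definition nondegenerate_form :: "('a::real_vector \<Rightarrow> 'a \<Rightarrow> real) \<Rightarrow> bool" where
  "nondegenerate_form \<alpha> \<longleftrightarrow> (\<forall>x. (\<forall>y. \<alpha> x y = 0) \<longrightarrow> x = 0)"

definition symmetric_form :: "('a \<Rightarrow> 'a \<Rightarrow> real) \<Rightarrow> bool" where
  "symmetric_form \<alpha> \<longleftrightarrow> (\<forall>x y. \<alpha> x y = \<alpha> y x)"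

text \<open>A (real) module over the Clifford algebra Cl(V0,alpha), convention v.v = -alpha(v,v):
  by the universal property of the Clifford algebra this is the same as a bilinear
  map (v,s) \<mapsto> v.s with v.(v.s) = - alpha(v,v) s.\<close>
definition clifford_module ::
  "('a::real_vector \<Rightarrow> 'a \<Rightarrow> real) \<Rightarrow> ('a \<Rightarrow> 'b::real_vector \<Rightarrow> 'b) \<Rightarrow> bool" where
  "clifford_module \<alpha> cm \<longleftrightarrow> bilinear cm \<and> (\<forall>v s. cm v (cm v s) = - (\<alpha> v v) *\<^sub>R s)"

definition finite_dim_space :: "'b::real_vector itself \<Rightarrow> bool" where
  "finite_dim_space _ \<longleftrightarrow> (\<exists>B::'b set. finite B \<and> span B = UNIV)"

text \<open>Generator of spin(V0) \<subseteq> gl(V0) x gl(V1) attached to v \<wedge> w: it is the element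
  (1/4)(v.w - w.v) of the Clifford algebra; it acts on V0 by the commutator
  u \<mapsto> alpha(v,u) w - alpha(w,u) v (an element of so(V0,alpha)) and on V1 by
  Clifford multiplication s \<mapsto> (1/4)(v.(w.s) - w.(v.s)).\<close>
definition spin_gen ::
  "('a::real_vector \<Rightarrow> 'a \<Rightarrow> real) \<Rightarrow> ('a \<Rightarrow> 'b::real_vector \<Rightarrow> 'b) \<Rightarrow> 'a \<Rightarrow> 'a
     \<Rightarrow> ('a \<times> 'b \<Rightarrow> 'a \<times> 'b)" where
  "spin_gen \<alpha> cm v w = (\<lambda>(u, s).
      (\<alpha> v u *\<^sub>R w - \<alpha> w u *\<^sub>R v,
       (1/4) *\<^sub>R (cm v (cm w s) - cm w (cm v s))))"

definition spin_alg ::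
  "('a::real_vector \<Rightarrow> 'a \<Rightarrow> real) \<Rightarrow> ('a \<Rightarrow> 'b::real_vector \<Rightarrow> 'b) \<Rightarrow> ('a \<times> 'b \<Rightarrow> 'a \<times> 'b) set" where
  "spin_alg \<alpha> cm = {A. \<exists>(n::nat) (c::nat \<Rightarrow> real) v w.
      A = (\<lambda>x. \<Sum>i<n. c i *\<^sub>R spin_gen \<alpha> cm (v i) (w i) x)}"

definition W_map :: "('a::real_vector \<Rightarrow> 'b::real_vector \<Rightarrow> 'b) \<Rightarrow> 'b \<Rightarrow> ('a \<times> 'b \<Rightarrow> 'a \<times> 'b)" where
  "W_map cm s = (\<lambda>(u, t). (0, cm u s))"

definition W_space :: "('a::real_vector \<Rightarrow> 'b::real_vector \<Rightarrow> 'b) \<Rightarrow> ('a \<times> 'b \<Rightarrow> 'a \<times> 'b) set" where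
  "W_space cm = {W_map cm s | s. True}"

definition spinW_alg ::
  "('a::real_vector \<Rightarrow> 'a \<Rightarrow> real) \<Rightarrow> ('a \<Rightarrow> 'b::real_vector \<Rightarrow> 'b) \<Rightarrow> ('a \<times> 'b \<Rightarrow> 'a \<times> 'b) set" where
  "spinW_alg \<alpha> cm = {(\<lambda>x. A x + B x) | A B. A \<in> spin_alg \<alpha> cm \<and> B \<in> W_space cm}"

text \<open>Homogeneous parts of V = V0 (+) V1: parity False = even (V0), True = odd (V1).\<close>
definition par_part :: "bool \<Rightarrow> ('a::real_vector \<times> 'b::real_vector) set" where
  "par_part p = (if p then {(0, y) | y. True} else {(x, 0) | x. True})"

text \<open>An element X of g^(k) (\<subseteq> Hom(V, Hom(V, ..., gl(V)))) is represented by
  the function F on lists with F [v0,...,vk,u] = X(v0)...(vk)(u) and F xs = 0 for lists of any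
  other length. Then X(v) is represented by (\<lambda>xs. F (v # xs)) and X(v)(w) by
  (\<lambda>xs. F (v # w # xs)) (for k = 1 this is the vector X(v)(w) = F [v, w]).\<close>
fun prolong ::
  "('a::real_vector \<times> 'b::real_vector \<Rightarrow> 'a \<times> 'b) set \<Rightarrow> nat
     \<Rightarrow> (('a \<times> 'b) list \<Rightarrow> 'a \<times> 'b) set" where
  "prolong g 0 = {F. \<exists>A\<in>g. \<forall>xs. F xs = (case xs of [u] \<Rightarrow> A u | _ \<Rightarrow> 0)}"
| "prolong g (Suc k) = {F.
      (\<forall>xs. length xs \<noteq> k + 2 \<longrightarrow> F xs = 0) \<and>
      (\<forall>xs. linear (\<lambda>v. F (v # xs))) \<and>
      (\<forall>v. (\<lambda>xs. F (v # xs)) \<in> prolong g k) \<and>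
      (\<forall>p q v w. v \<in> par_part p \<and> w \<in> par_part q \<longrightarrow>
          (\<lambda>xs. F (v # w # xs)) = (\<lambda>xs. (if p \<and> q then -1 else 1) *\<^sub>R F (w # v # xs)))}"

definition finite_type :: "('a::real_vector \<times> 'b::real_vector \<Rightarrow> 'a \<times> 'b) set \<Rightarrow> bool" where
  "finite_type g \<longleftrightarrow> (\<exists>k. prolong g k = {\<lambda>_. 0})"

end

theory Submission
  imports Defs
begin

text \<open>The first prolongation already vanishes. Write X \<in> g^(1) as X(v) = A_v + f_{\<sigma>(v)}, where
  A_v is the lift to spin(V0) of R_v \<in> so(V0). On even arguments (a, b) \<mapsto> R_a b is symmetric
  while every R_a is \<alpha>-skew, so R vanishes on V0; comparing even with odd arguments then kills
  R and \<sigma> on V1. What remains is a linear \<sigma> : V0 \<rightarrow> V1 with a\<cdot>\<sigma>(b) = b\<cdot>\<sigma>(a). Contracting with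
  the \<alpha>-dual basis, \<omega> = \<Sum>k. e^k\<cdot>\<sigma>(e_k) satisfies x\<cdot>\<omega> = (n - 2) \<sigma>(x), so all Clifford
  products commute on \<omega>; this forces \<omega> = 0, hence \<sigma> = 0 because n \<ge> 3.\<close>

lemma clifford_module_anticomm:
  assumes "bilinear \<alpha>" "symmetric_form \<alpha>" "clifford_module \<alpha> cm"
  shows "cm x (cm y s) + cm y (cm x s) = - (2 * \<alpha> x y) *\<^sub>R s"
proof -
  have cm: "bilinear cm" and sq: "\<And>v s. cm v (cm v s) = - \<alpha> v v *\<^sub>R s"
    using assms(3) by (simp_all add: clifford_module_def)
  have "\<alpha> (x + y) (x + y) = \<alpha> x x + 2 * \<alpha> x y + \<alpha> y y"
    using assms(2) by (simp add: bilinear_ladd[OF assms(1)] bilinear_radd[OF assms(1)]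
        symmetric_form_def[of \<alpha>])
  moreover have "cm (x + y) (cm (x + y) s)
      = cm x (cm x s) + (cm x (cm y s) + cm y (cm x s)) + cm y (cm y s)"
    by (simp add: bilinear_ladd[OF cm] bilinear_radd[OF cm] algebra_simps)
  ultimately show ?thesis
    by (simp add: sq algebra_simps)
qed

lemma sym_skew_trilinear_eq_0:
  fixes \<phi> :: "'a \<Rightarrow> 'a \<Rightarrow> 'a \<Rightarrow> real"
  assumes sym: "\<And>a b c. \<phi> a b c = \<phi> b a c" and skew: "\<And>a b c. \<phi> a b c = - \<phi> a c b"
  shows "\<phi> a b c = 0"
proof -
  have "\<phi> a b c = - \<phi> a c b" by (rule skew)
  also have "\<dots> = \<phi> c b a" by (simp add: sym[of a c] skew[of c a b])
  also have "\<dots> = - \<phi> a b c" by (simp add: sym[of c b] skew[of b c a] sym[of b a])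
  finally show ?thesis by simp
qed

lemma prolong_Suc_0_memD:
  assumes "F \<in> prolong g (Suc 0)"
  shows "\<And>xs. length xs \<noteq> 2 \<Longrightarrow> F xs = 0"
    and "\<And>x. linear (\<lambda>v. F [v, x])"
    and "\<And>v. \<exists>A\<in>g. \<forall>x. F [v, x] = A x"
    and "\<And>v w p q. v \<in> par_part p \<Longrightarrow> w \<in> par_part q
          \<Longrightarrow> F [v, w] = (if p \<and> q then -1 else 1) *\<^sub>R F [w, v]"
proof -
  have F: "(\<forall>xs. length xs \<noteq> 2 \<longrightarrow> F xs = 0) \<and> (\<forall>xs. linear (\<lambda>v. F (v # xs))) \<and>
      (\<forall>v. (\<lambda>xs. F (v # xs)) \<in> prolong g 0) \<and>
      (\<forall>p q v w. v \<in> par_part p \<and> w \<in> par_part q \<longrightarrow>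
          (\<lambda>xs. F (v # w # xs)) = (\<lambda>xs. (if p \<and> q then -1 else 1) *\<^sub>R F (w # v # xs)))"
    using assms by simp
  then show "\<And>xs. length xs \<noteq> 2 \<Longrightarrow> F xs = 0" "\<And>x. linear (\<lambda>v. F [v, x])"
    by blast+
  show "\<exists>A\<in>g. \<forall>x. F [v, x] = A x" for v
  proof -
    from F have "(\<lambda>xs. F (v # xs)) \<in> prolong g 0" by blast
    then obtain A where "A \<in> g" "\<forall>xs. F (v # xs) = (case xs of [u] \<Rightarrow> A u | _ \<Rightarrow> 0)"
      unfolding prolong.simps by blast
    then show ?thesis by force
  qed
  show "F [v, w] = (if p \<and> q then -1 else 1) *\<^sub>R F [w, v]"
    if "v \<in> par_part p" "w \<in> par_part q" for v w p q
    using F that by (blast dest: fun_cong[of _ _ "[]"])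
qed

locale real_clifford_module =
  fixes \<alpha> :: "'a::euclidean_space \<Rightarrow> 'a \<Rightarrow> real" and cm :: "'a \<Rightarrow> 'b::real_vector \<Rightarrow> 'b"
  assumes bilinear_form: "bilinear \<alpha>" and symmetric: "symmetric_form \<alpha>"
    and nondegenerate: "nondegenerate_form \<alpha>" and clifford: "clifford_module \<alpha> cm"
begin

lemma bilinear_cm: "bilinear cm"
  using clifford by (simp add: clifford_module_def)

lemma alpha_commute: "\<alpha> x y = \<alpha> y x"
  using symmetric by (simp add: symmetric_form_def)

lemma alpha_eq_0_imp: "(\<And>y. \<alpha> x y = 0) \<Longrightarrow> x = 0"
  using nondegenerate by (auto simp: nondegenerate_form_def)

lemmas cm_simps = bilinear_ladd[OF bilinear_cm] bilinear_radd[OF bilinear_cm]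
  bilinear_lmul[OF bilinear_cm] bilinear_rmul[OF bilinear_cm]
  bilinear_lsub[OF bilinear_cm] bilinear_rsub[OF bilinear_cm]
  bilinear_lneg[OF bilinear_cm] bilinear_rneg[OF bilinear_cm]
  bilinear_lzero[OF bilinear_cm] bilinear_rzero[OF bilinear_cm]
  linear_sum[OF bilinear_cm[unfolded bilinear_def, THEN conjunct1, rule_format]]
  linear_sum[OF bilinear_cm[unfolded bilinear_def, THEN conjunct2, rule_format]]

lemmas alpha_simps = bilinear_ladd[OF bilinear_form] bilinear_radd[OF bilinear_form]
  bilinear_lmul[OF bilinear_form] bilinear_rmul[OF bilinear_form]
  bilinear_lsub[OF bilinear_form] bilinear_rsub[OF bilinear_form]
  bilinear_lneg[OF bilinear_form] bilinear_rneg[OF bilinear_form]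
  bilinear_lzero[OF bilinear_form] bilinear_rzero[OF bilinear_form]
  linear_sum[OF bilinear_form[unfolded bilinear_def, THEN conjunct1, rule_format]]
  linear_sum[OF bilinear_form[unfolded bilinear_def, THEN conjunct2, rule_format]]

lemma cm_anticomm: "cm x (cm y s) + cm y (cm x s) = - (2 * \<alpha> x y) *\<^sub>R s"
  by (rule clifford_module_anticomm[OF bilinear_form symmetric clifford])

lemma alpha_basis_expansion: "\<alpha> x y = (\<Sum>j\<in>Basis. (y \<bullet> j) * \<alpha> x j)"
  by (subst euclidean_representation[symmetric, of y]) (simp add: alpha_simps)

lemma exists_alpha_dual: "\<exists>d. \<forall>y. \<alpha> d y = k \<bullet> y"
proof -
  define L where "L x = (\<Sum>j\<in>Basis. \<alpha> x j *\<^sub>R j)" for x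
  have "linear L"
    by (rule linearI) (simp_all add: L_def alpha_simps scaleR_add_left sum.distrib scaleR_sum_right)
  have L_inner: "L x \<bullet> j = \<alpha> x j" if "j \<in> Basis" for x j
    using that by (simp add: L_def inner_sum_left inner_Basis if_distrib cong: if_cong)
  have "inj L"
    unfolding linear_inj_iff_eq_0[OF \<open>linear L\<close>]
  proof (intro allI impI)
    fix x assume "L x = 0"
    then have "\<alpha> x j = 0" if "j \<in> Basis" for j
      using L_inner[OF that, of x] by simp
    then show "x = 0"
      by (intro alpha_eq_0_imp) (subst alpha_basis_expansion, simp)
  qed
  then obtain d where "L d = k"
    using linear_injective_imp_surjective[OF \<open>linear L\<close>] by (metis surjD order_refl)
  then have "\<alpha> d y = k \<bullet> y" for y
    by (subst alpha_basis_expansion, subst euclidean_inner)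
      (auto simp: L_inner[symmetric] mult.commute intro: sum.cong)
  then show ?thesis by blast
qed

definition dual :: "'a \<Rightarrow> 'a" where
  "dual k = (SOME d. \<forall>y. \<alpha> d y = k \<bullet> y)"

lemma alpha_dual: "\<alpha> (dual k) y = k \<bullet> y"
  unfolding dual_def using someI_ex[OF exists_alpha_dual] by blast

lemma sum_alpha_scaleR_dual: "(\<Sum>k\<in>Basis. \<alpha> v k *\<^sub>R dual k) = v"
proof -
  have "\<alpha> ((\<Sum>k\<in>Basis. \<alpha> v k *\<^sub>R dual k) - v) y = 0" for y
  proof -
    have "\<alpha> ((\<Sum>k\<in>Basis. \<alpha> v k *\<^sub>R dual k) - v) y = (\<Sum>k\<in>Basis. \<alpha> v k * (k \<bullet> y)) - \<alpha> v y"
      by (simp add: alpha_simps alpha_dual)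
    also have "\<dots> = 0"
      by (subst alpha_basis_expansion[of v y]) (simp add: inner_commute mult.commute)
    finally show ?thesis .
  qed
  then show ?thesis
    using alpha_eq_0_imp by fastforce
qed

lemma sum_alpha_dual_scaleR: "(\<Sum>k\<in>Basis. \<alpha> v (dual k) *\<^sub>R k) = v"
  by (simp add: alpha_commute[of v] alpha_dual inner_commute[of _ v] euclidean_representation)

lemma clifford_trace: "(\<Sum>k\<in>Basis. cm (dual k) (cm k s)) = - real DIM('a) *\<^sub>R s"
proof -
  let ?S = "\<Sum>k\<in>Basis. cm (dual k) (cm k s)"
  have "(\<Sum>k\<in>Basis. cm k (cm (dual k) s))
      = (\<Sum>k\<in>Basis. \<Sum>j\<in>Basis. \<alpha> k j *\<^sub>R cm (dual j) (cm (dual k) s))"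
    by (subst (1) sum_alpha_scaleR_dual[symmetric]) (simp add: cm_simps)
  also have "\<dots> = (\<Sum>j\<in>Basis. \<Sum>k\<in>Basis. \<alpha> j k *\<^sub>R cm (dual j) (cm (dual k) s))"
    by (subst sum.swap) (simp add: alpha_commute)
  also have "\<dots> = ?S"
    by (subst (3) sum_alpha_scaleR_dual[symmetric]) (simp add: cm_simps)
  finally have swap: "(\<Sum>k\<in>Basis. cm k (cm (dual k) s)) = ?S" .
  have "?S + ?S = (\<Sum>k\<in>Basis. cm (dual k) (cm k s) + cm k (cm (dual k) s))"
    by (simp add: sum.distrib swap)
  also have "\<dots> = (\<Sum>k\<in>(Basis::'a set). - 2 *\<^sub>R s)"
    by (rule sum.cong) (simp_all add: cm_anticomm alpha_dual)
  also have "\<dots> = (2 * - real DIM('a)) *\<^sub>R s"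
    by (simp add: sum_constant_scaleR)
  finally have "2 *\<^sub>R ?S = 2 *\<^sub>R (- real DIM('a) *\<^sub>R s)"
    by (simp add: scaleR_2)
  then show ?thesis
    by (metis scaleR_cancel_left zero_neq_numeral)
qed

lemma cm_annihilator_eq_0:
  assumes "\<And>b. cm b s = 0"
  shows "s = 0"
proof -
  have "- real DIM('a) *\<^sub>R s = (\<Sum>k\<in>Basis. cm (dual k) (cm k s))"
    by (rule clifford_trace[symmetric])
  also have "\<dots> = 0"
    by (simp add: assms cm_simps)
  finally show ?thesis
    by simp
qed

lemma cm_commuting_eq_0:
  assumes comm: "\<And>x y. cm x (cm y \<omega>) = cm y (cm x \<omega>)" and "DIM('a) \<ge> 2"
  shows "\<omega> = 0"
proof (rule cm_annihilator_eq_0)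
  fix y
  have scalar: "cm x (cm y \<omega>) = - \<alpha> x y *\<^sub>R \<omega>" for x y
  proof -
    have "2 *\<^sub>R cm x (cm y \<omega>) = 2 *\<^sub>R (- \<alpha> x y *\<^sub>R \<omega>)"
      using cm_anticomm[of x y \<omega>] comm[of y x] by (simp add: scaleR_2)
    then show ?thesis
      by (metis scaleR_cancel_left zero_neq_numeral)
  qed
  let ?Q = "\<Sum>k\<in>Basis. cm (dual k) (cm y (cm k \<omega>))"
  have "cm y (cm k \<omega>) = - cm k (cm y \<omega>) - (2 * \<alpha> y k) *\<^sub>R \<omega>" for k
    using cm_anticomm[of y k \<omega>] by (simp add: algebra_simps eq_neg_iff_add_eq_0)
  then have "?Q = - (\<Sum>k\<in>Basis. cm (dual k) (cm k (cm y \<omega>)))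
      - 2 *\<^sub>R cm (\<Sum>k\<in>Basis. \<alpha> y k *\<^sub>R dual k) \<omega>"
    by (simp add: cm_simps sum_subtractf sum_negf scaleR_sum_right)
  also have "\<dots> = (real DIM('a) - 2) *\<^sub>R cm y \<omega>"
    by (simp add: clifford_trace sum_alpha_scaleR_dual algebra_simps)
  finally have "?Q = (real DIM('a) - 2) *\<^sub>R cm y \<omega>" .
  moreover have "?Q = - cm (\<Sum>k\<in>Basis. \<alpha> y k *\<^sub>R dual k) \<omega>"
    by (simp add: scalar cm_simps sum_negf)
  ultimately have "(real DIM('a) - 2) *\<^sub>R cm y \<omega> = - cm y \<omega>"
    by (simp add: sum_alpha_scaleR_dual)
  then have "(real DIM('a) - 1) *\<^sub>R cm y \<omega> = 0"
    by (metis add.commute add_diff_cancel_left diff_add_cancel neg_eq_iff_add_eq_0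
        one_add_one scaleR_collapse scaleR_left_diff_distrib)
  then show "cm y \<omega> = 0"
    using assms(2) by simp
qed

lemma cm_symmetric_linear_eq_0:
  assumes "linear \<sigma>" and symm: "\<And>a b. cm a (\<sigma> b) = cm b (\<sigma> a)" and "DIM('a) \<ge> 3"
  shows "\<sigma> x = 0"
proof -
  define \<omega> where "\<omega> = (\<Sum>k\<in>Basis. cm (dual k) (\<sigma> k))"
  have "cm x (cm (dual k) (\<sigma> k)) = - cm (dual k) (cm k (\<sigma> x)) - (2 * \<alpha> x (dual k)) *\<^sub>R \<sigma> k"
    for x k
    using cm_anticomm[of x "dual k" "\<sigma> k"] symm[of x k]
    by (simp add: algebra_simps eq_neg_iff_add_eq_0)
  then have "cm x \<omega> = - (\<Sum>k\<in>Basis. cm (dual k) (cm k (\<sigma> x)))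
      - 2 *\<^sub>R \<sigma> (\<Sum>k\<in>Basis. \<alpha> x (dual k) *\<^sub>R k)" for x
    by (simp add: \<omega>_def cm_simps sum_subtractf sum_negf scaleR_sum_right
        linear_sum[OF \<open>linear \<sigma>\<close>] linear_scale[OF \<open>linear \<sigma>\<close>])
  then have omega: "cm x \<omega> = (real DIM('a) - 2) *\<^sub>R \<sigma> x" for x
    by (simp add: clifford_trace sum_alpha_dual_scaleR algebra_simps)
  have "\<omega> = 0"
    by (rule cm_commuting_eq_0) (use assms(3) in \<open>simp_all add: omega cm_simps symm\<close>)
  then have "(real DIM('a) - 2) *\<^sub>R \<sigma> x = 0"
    by (simp add: omega[symmetric] cm_simps)
  then show ?thesis
    using assms(3) by simp
qed

lemma linear_if_linear_cm:
  assumes "\<And>b. linear (\<lambda>x. cm b (\<sigma> x))"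
  shows "linear \<sigma>"
proof (rule linearI)
  fix x y :: 'c and c :: real
  have "cm b (\<sigma> (x + y) - (\<sigma> x + \<sigma> y)) = 0" for b
    using linear_add[OF assms[of b], of x y] by (simp add: cm_simps)
  then show "\<sigma> (x + y) = \<sigma> x + \<sigma> y"
    using cm_annihilator_eq_0 by fastforce
  have "cm b (\<sigma> (c *\<^sub>R x) - c *\<^sub>R \<sigma> x) = 0" for b
    using linear_scale[OF assms[of b], of c x] by (simp add: cm_simps)
  then show "\<sigma> (c *\<^sub>R x) = c *\<^sub>R \<sigma> x"
    using cm_annihilator_eq_0 by fastforce
qed

definition skew_adjoint :: "('a \<Rightarrow> 'a) \<Rightarrow> bool" where
  "skew_adjoint R \<longleftrightarrow> (\<forall>u u'. \<alpha> (R u) u' = - \<alpha> u (R u'))"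

text \<open>The lift of R \<in> so(V0) to spin(V0) is the Clifford element (1/4) \<Sum>k. e^k R(e_k),
  where e^k = dual e_k runs through the \<alpha>-dual basis.\<close>
definition spinor_action :: "('a \<Rightarrow> 'a) \<Rightarrow> 'b \<Rightarrow> 'b" where
  "spinor_action R s = (1/4) *\<^sub>R (\<Sum>k\<in>Basis. cm (dual k) (cm (R k) s))"

definition spin_action :: "('a \<Rightarrow> 'a) \<Rightarrow> 'a \<times> 'b \<Rightarrow> 'a \<times> 'b" where
  "spin_action R = (\<lambda>(u, s). (R u, spinor_action R s))"

lemma skew_adjoint_0: "skew_adjoint R \<Longrightarrow> R 0 = 0"
  by (rule alpha_eq_0_imp) (simp add: skew_adjoint_def alpha_simps)

lemma spinor_action_zero [simp]: "spinor_action R 0 = 0" "spinor_action (\<lambda>_. 0) s = 0"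
  by (simp_all add: spinor_action_def cm_simps)

lemma spin_gen_eq_spin_action:
  "spin_gen \<alpha> cm v w = spin_action (\<lambda>u. \<alpha> v u *\<^sub>R w - \<alpha> w u *\<^sub>R v)"
proof -
  have "(\<Sum>k\<in>Basis. cm (dual k) (cm (\<alpha> v k *\<^sub>R w - \<alpha> w k *\<^sub>R v) s))
      = cm (\<Sum>k\<in>Basis. \<alpha> v k *\<^sub>R dual k) (cm w s) - cm (\<Sum>k\<in>Basis. \<alpha> w k *\<^sub>R dual k) (cm v s)"
    for s by (simp add: cm_simps sum_subtractf)
  then show ?thesis
    by (simp add: spin_gen_def spin_action_def spinor_action_def sum_alpha_scaleR_dual)
qed

lemma skew_adjoint_wedge: "skew_adjoint (\<lambda>u. \<alpha> v u *\<^sub>R w - \<alpha> w u *\<^sub>R v)"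
  by (simp add: skew_adjoint_def alpha_simps alpha_commute[of _ v] alpha_commute[of _ w]
      algebra_simps)

lemma spin_action_lincomb:
  "c *\<^sub>R spin_action R x + spin_action R' x = spin_action (\<lambda>u. c *\<^sub>R R u + R' u) x"
  by (simp add: spin_action_def spinor_action_def cm_simps sum.distrib scaleR_sum_right
      algebra_simps split: prod.split)

lemma skew_adjoint_lincomb:
  "skew_adjoint R \<Longrightarrow> skew_adjoint R' \<Longrightarrow> skew_adjoint (\<lambda>u. c *\<^sub>R R u + R' u)"
  by (simp add: skew_adjoint_def alpha_simps)

lemma spin_alg_imp_spin_action:
  assumes "A \<in> spin_alg \<alpha> cm"
  shows "\<exists>R. skew_adjoint R \<and> A = spin_action R"
proof -
  obtain n :: nat and c v w where A: "A = (\<lambda>x. \<Sum>i<n. c i *\<^sub>R spin_gen \<alpha> cm (v i) (w i) x)"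
    using assms by (auto simp: spin_alg_def)
  have "\<exists>R. skew_adjoint R \<and> (\<lambda>x. \<Sum>i<m. c i *\<^sub>R spin_gen \<alpha> cm (v i) (w i) x) = spin_action R"
    for m
  proof (induction m)
    case 0
    have "skew_adjoint (\<lambda>_. 0)" by (simp add: skew_adjoint_def alpha_simps)
    moreover have "(\<lambda>_. 0) = spin_action (\<lambda>_. 0)"
      by (auto simp: spin_action_def zero_prod_def)
    ultimately show ?case by auto
  next
    case (Suc m)
    then obtain R where "skew_adjoint R"
      and R: "(\<lambda>x. \<Sum>i<m. c i *\<^sub>R spin_gen \<alpha> cm (v i) (w i) x) = spin_action R" by blast
    let ?R' = "\<lambda>u. c m *\<^sub>R (\<alpha> (v m) u *\<^sub>R w m - \<alpha> (w m) u *\<^sub>R v m) + R u"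
    have "skew_adjoint ?R'"
      by (rule skew_adjoint_lincomb[OF skew_adjoint_wedge \<open>skew_adjoint R\<close>])
    moreover have "(\<lambda>x. \<Sum>i<Suc m. c i *\<^sub>R spin_gen \<alpha> cm (v i) (w i) x) = spin_action ?R'"
    proof
      fix x
      have "(\<Sum>i<Suc m. c i *\<^sub>R spin_gen \<alpha> cm (v i) (w i) x)
          = c m *\<^sub>R spin_gen \<alpha> cm (v m) (w m) x + spin_action R x"
        using fun_cong[OF R, of x] by (simp add: add.commute)
      then show "(\<Sum>i<Suc m. c i *\<^sub>R spin_gen \<alpha> cm (v i) (w i) x) = spin_action ?R' x"
        by (simp only: spin_gen_eq_spin_action spin_action_lincomb)
    qed
    ultimately show ?case by blast
  qed
  then show ?thesis using A by blast
qed

lemma first_prolongation_components: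
  assumes "F \<in> prolong (spinW_alg \<alpha> cm) (Suc 0)"
  obtains R \<sigma> where "\<And>v. skew_adjoint (R v)"
    and "\<And>v x. F [v, x] = spin_action (R v) x + W_map cm (\<sigma> v) x"
proof -
  have "\<exists>R \<sigma>. skew_adjoint R \<and> (\<forall>x. F [v, x] = spin_action R x + W_map cm \<sigma> x)" for v
  proof -
    obtain A where "A \<in> spinW_alg \<alpha> cm" and A: "\<forall>x. F [v, x] = A x"
      using prolong_Suc_0_memD(3)[OF assms] by blast
    then obtain S \<sigma> where "S \<in> spin_alg \<alpha> cm" and SW: "A = (\<lambda>x. S x + W_map cm \<sigma> x)"
      by (auto simp: spinW_alg_def W_space_def)
    then obtain R where "skew_adjoint R" "S = spin_action R"
      using spin_alg_imp_spin_action by blast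
    with A SW show ?thesis by auto
  qed
  then show ?thesis
    using that by metis
qed

lemma first_prolongation_W_valued:
  assumes F: "F \<in> prolong (spinW_alg \<alpha> cm) (Suc 0)"
  obtains \<tau> where "\<And>v b t. F [v, (b, t)] = (0, cm b (\<tau> (fst v)))"
proof -
  obtain R \<sigma> where skew: "\<And>v. skew_adjoint (R v)"
    and "\<And>v x. F [v, x] = spin_action (R v) x + W_map cm (\<sigma> v) x"
    using first_prolongation_components[OF F] by blast
  then have F_pair: "F [v, (b, t)] = (R v b, spinor_action (R v) t + cm b (\<sigma> v))" for v b t
    by (simp add: spin_action_def W_map_def)
  have swap: "F [(a, 0), w] = F [w, (a, 0)]" if "w \<in> par_part q" for a w q
    using prolong_Suc_0_memD(4)[OF F _ that, of "(a, 0)" False] by (simp add: par_part_def)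
  have R_even: "R (a, 0) = (\<lambda>_. 0)" for a
  proof -
    define \<phi> where "\<phi> a b c = \<alpha> (R (a, 0) b) c" for a b c
    have "\<phi> a b c = \<phi> b a c" for a b c
      using swap[of "(b, 0)" False a] by (simp add: \<phi>_def F_pair par_part_def)
    moreover have "\<phi> a b c = - \<phi> a c b" for a b c
      using skew[of "(a, 0)"] by (simp add: \<phi>_def skew_adjoint_def alpha_commute[of b])
    ultimately have "\<phi> a b c = 0" for b c
      by (rule sym_skew_trilinear_eq_0)
    then show ?thesis
      using alpha_eq_0_imp by (auto simp: \<phi>_def)
  qed
  have "cm a (\<sigma> (0, s)) = 0 \<and> R (0, s) a = 0" for a s
    using swap[of "(0, s)" True a] skew_adjoint_0[OF skew]
    by (simp add: F_pair R_even par_part_def cm_simps)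
  then have R_odd: "R (0, s) = (\<lambda>_. 0)" and \<sigma>_odd: "\<sigma> (0, s) = 0" for s
    using cm_annihilator_eq_0 by auto
  have "F [v, (b, t)] = F [(fst v, 0), (b, t)] + F [(0, snd v), (b, t)]" for v b t
    using linear_add[OF prolong_Suc_0_memD(2)[OF F], of "(fst v, 0)" "(0, snd v)"] by simp
  then have "F [v, (b, t)] = (0, cm b (\<sigma> (fst v, 0)))" for v b t
    by (simp add: F_pair R_even R_odd \<sigma>_odd cm_simps)
  then show ?thesis by (rule that)
qed

lemma first_prolongation_eq_0:
  assumes F: "F \<in> prolong (spinW_alg \<alpha> cm) (Suc 0)" and "DIM('a) \<ge> 3"
  shows "F = (\<lambda>_. 0)"
proof -
  obtain \<tau> where F_pair: "\<And>v b t. F [v, (b, t)] = (0, cm b (\<tau> (fst v)))"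
    using first_prolongation_W_valued[OF F] by blast
  have lin: "linear (\<lambda>v. F [v, x])" for x
    by (rule prolong_Suc_0_memD(2)[OF F])
  have "linear \<tau>"
  proof (rule linear_if_linear_cm, rule linearI)
    fix b x y :: 'a and c :: real
    show "cm b (\<tau> (x + y)) = cm b (\<tau> x) + cm b (\<tau> y)"
      using linear_add[OF lin[of "(b, 0)"], of "(x, 0)" "(y, 0)"] by (simp add: F_pair)
    show "cm b (\<tau> (c *\<^sub>R x)) = c *\<^sub>R cm b (\<tau> x)"
      using linear_scale[OF lin[of "(b, 0)"], of c "(x, 0)"] by (simp add: F_pair)
  qed
  moreover have "cm a (\<tau> b) = cm b (\<tau> a)" for a b
    using prolong_Suc_0_memD(4)[OF F, of "(b, 0)" False "(a, 0)" False]
    by (simp add: F_pair par_part_def)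
  ultimately have "\<tau> a = 0" for a
    using assms(2) by (rule cm_symmetric_linear_eq_0)
  then have "F [v, (b, t)] = 0" for v b t
    by (simp add: F_pair cm_simps zero_prod_def)
  then show ?thesis
  proof (intro ext)
    fix xs :: "('a \<times> 'b) list"
    show "F xs = 0" if "\<And>v b t. F [v, (b, t)] = 0"
      using prolong_Suc_0_memD(1)[OF F] that
      by (cases "length xs = 2") (auto simp: numeral_2_eq_2 length_Suc_conv)
  qed
qed

lemma zero_in_first_prolongation: "(\<lambda>_. 0) \<in> prolong (spinW_alg \<alpha> cm) (Suc 0)"
proof -
  have "(\<lambda>_. 0) \<in> spin_alg \<alpha> cm"
    by (auto simp: spin_alg_def intro!: exI[of _ "0::nat"])
  moreover have "W_map cm 0 \<in> W_space cm"
    unfolding W_space_def by blast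
  moreover have "W_map cm 0 = (\<lambda>_. 0)"
    by (auto simp: W_map_def cm_simps zero_prod_def)
  ultimately have "(\<lambda>_. 0) \<in> spinW_alg \<alpha> cm"
    unfolding spinW_alg_def by force
  then show ?thesis
    by (auto intro!: bexI[of _ "\<lambda>_. 0"] linear_zero split: list.split)
qed

end

theorem mainTheorem5:
  fixes \<alpha> :: "'a::euclidean_space \<Rightarrow> 'a \<Rightarrow> real"
    and cm :: "'a \<Rightarrow> 'b::real_vector \<Rightarrow> 'b"
  assumes "bilinear \<alpha>" and "symmetric_form \<alpha>" and "nondegenerate_form \<alpha>"
    and "finite_dim_space TYPE('b)"
    and "clifford_module \<alpha> cm"
    and "DIM('a) \<ge> 3"
  shows "finite_type (spinW_alg \<alpha> cm)"
proof -
  interpret real_clifford_module \<alpha> cm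
    using assms by (simp add: real_clifford_module_def)
  have "prolong (spinW_alg \<alpha> cm) (Suc 0) = {\<lambda>_. 0}"
    using first_prolongation_eq_0 zero_in_first_prolongation assms(6) by blast
  then show ?thesis
    unfolding finite_type_def by blast
qed

end
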